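(* Let $n\geq 2$ and number the crossings of the $n$-foil $1,\dots,n$ in any fixed order. The set of words of the states of the $n$-foil consisting of exactly two closed curves is \[ \mathcal{F}_n=\left\{1^p01^k01^{n-p-k-2}\;\middle|\; 0\leq p\leq n-2,\ 0\leq k\leq n-p-2\right\}\cup\left\{1^n\right\}. \]
   Context: A (shadow) diagram is a finite collection of closed curves in the plane in general position whose only singularities are finitely many transverse double points, called crossings; over/under information is ignored. At a crossing four corners of complementary regions meet, forming two pairs of opposite corners. Splitting a crossing replaces a small neighbourhood of it by two disjoint arcs in one of two ways, each merging one pair of opposite corners into a channel. A state is the result of choosing a split at every crossing; it is a disjoint union of simple closed curves. The $n$-foil ($n\geq 2$) is drawn as the closure of a $2$-strand braid with $n$ crossings: two strands run once around a central point and cross each other $n$ times (the standard diagram of the $(2,n)$ torus knot or link, e.g. the trefoil for $n=3$, two overlapping circles for $n=2$). Its complementary regions are the unbounded region, a central region, and $n$ bigons; at each crossing the central and unbounded regions occupy one pair of opposite corners and two bigons occupy the other pair. The $A$-split at a crossing is the split merging the corners of the central and unbounded regions; the $B$-split merges the two bigon corners. With crossings numbered $1,\dots,n$, a state is recorded by the binary word whose $i$-th letter is $0$ if an $A$-split is applied at crossing $i$ and $1$ if a $B$-split is applied. Notation: $\sigma^k$ denotes $k$ consecutive copies of the letter $\sigma$ (empty if $k\leq 0$), words are concatenated. *)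

theory Defs
  imports Main
begin

text \<open>Combinatorial model of the n-foil (closure of the 2-braid with n crossings).
Crossings are 0,...,n-1 in cyclic order around the centre; between crossing i and
crossing (i+1) mod n lies a bigon bounded by an inner strand segment (facing the
central region) and an outer strand segment (facing the unbounded region).
At crossing i the four half-edges are (i, side, level) with side Lft (towards the
bigon between i-1 and i) or Rgt (towards the bigon between i and i+1) and level
Inn or Outr.  Corners at crossing i: central corner between (i,Lft,Inn),(i,Rgt,Inn);
unbounded corner between (i,Lft,Outr),(i,Rgt,Outr); bigon corners between
(i,Lft,Inn),(i,Lft,Outr) and between (i,Rgt,Inn),(i,Rgt,Outr).\<close>

datatype side = Lft | Rgt
datatype level = Inn | Outr
datatype split = A_split | B_split

type_synonym endpoint = "nat \<times> side \<times> level"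

definition foil_ends :: "nat \<Rightarrow> endpoint set" where
  "foil_ends n = {0..<n} \<times> UNIV \<times> UNIV"

definition foil_segments :: "nat \<Rightarrow> (endpoint \<times> endpoint) set" where
  "foil_segments n = {((i, Rgt, l), (Suc i mod n, Lft, l)) | i l. i < n}"

text \<open>The A-split merges the central and unbounded
corners, so its two arcs run around the two bigon corners; the B-split merges the
two bigon corners, so its two arcs run around the central and unbounded corners.\<close>
definition split_arcs :: "nat \<Rightarrow> (nat \<Rightarrow> split) \<Rightarrow> (endpoint \<times> endpoint) set" where
  "split_arcs n s =
     {((i, Lft, l), (i, Rgt, l)) | i l. i < n \<and> s i = B_split}
   \<union> {((i, sd, Inn), (i, sd, Outr)) | i sd. i < n \<and> s i = A_split}"

definition state_rel :: "nat \<Rightarrow> (nat \<Rightarrow> split) \<Rightarrow> endpoint rel" where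
  "state_rel n s = (let E = foil_segments n \<union> split_arcs n s in (E \<union> E\<inverse>)\<^sup>*)"

definition num_curves :: "nat \<Rightarrow> (nat \<Rightarrow> split) \<Rightarrow> nat" where
  "num_curves n s = card (foil_ends n // state_rel n s)"

definition state_of_word :: "(nat \<Rightarrow> nat) \<Rightarrow> nat list \<Rightarrow> nat \<Rightarrow> split" where
  "state_of_word \<pi> w c = (if w ! \<pi> c = 0 then A_split else B_split)"

end

theory Submission
  imports Defs
begin

text \<open>The curves of a state are in bijection with its A-split crossings: following the
foil backwards from any strand end, consecutive B-splits keep the curve on its level
until an A-split is met, which joins the inner and outer levels.  Hence every curve
passes through exactly one A-crossing, and if there are none the state consists of the
inner and the outer circle.  So a state has two curves iff its word has no or exactly
two letters 0.\<close>

definition cyc_pred :: "nat \<Rightarrow> nat \<Rightarrow> nat" where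
  "cyc_pred n i = (i + n - 1) mod n"

lemma cyc_pred_less: "0 < n \<Longrightarrow> cyc_pred n i < n"
  unfolding cyc_pred_def by simp

lemma cyc_pred_0: "0 < n \<Longrightarrow> cyc_pred n 0 = n - 1"
  unfolding cyc_pred_def by simp

lemma cyc_pred_pos: "0 < i \<Longrightarrow> i < n \<Longrightarrow> cyc_pred n i = i - 1"
  unfolding cyc_pred_def by (simp add: mod_if)

lemma cyc_pred_Suc_mod:
  assumes "i < n"
  shows "cyc_pred n (Suc i mod n) = i"
proof (cases "Suc i = n")
  case True
  then show ?thesis unfolding cyc_pred_def by simp
next
  case False
  then show ?thesis using assms unfolding cyc_pred_def by simp
qed

lemma Suc_cyc_pred_mod: "i < n \<Longrightarrow> Suc (cyc_pred n i) mod n = i"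
  unfolding cyc_pred_def by (cases i) auto

definition A_crossings :: "nat \<Rightarrow> (nat \<Rightarrow> split) \<Rightarrow> nat set" where
  "A_crossings n s = {j. j < n \<and> s j = A_split}"

definition last_A :: "nat \<Rightarrow> (nat \<Rightarrow> split) \<Rightarrow> nat \<Rightarrow> nat" where
  "last_A n s i =
     (if \<exists>j\<le>i. s j = A_split then Max {j. j \<le> i \<and> s j = A_split} else Max (A_crossings n s))"

lemma last_A_mem:
  assumes "i < n" "A_crossings n s \<noteq> {}"
  shows "last_A n s i \<in> A_crossings n s"
proof (cases "\<exists>j\<le>i. s j = A_split")
  case True
  then have "Max {j. j \<le> i \<and> s j = A_split} \<in> {j. j \<le> i \<and> s j = A_split}"
    by (intro Max_in) auto
  moreover have "last_A n s i = Max {j. j \<le> i \<and> s j = A_split}"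
    using True unfolding last_A_def by (rule if_P)
  ultimately show ?thesis using assms(1) unfolding A_crossings_def by auto
next
  case False
  have "last_A n s i = Max (A_crossings n s)"
    using False unfolding last_A_def by (rule if_not_P)
  moreover have "Max (A_crossings n s) \<in> A_crossings n s"
    using assms(2) by (intro Max_in) (auto simp: A_crossings_def)
  ultimately show ?thesis by simp
qed

lemma last_A_self: "s i = A_split \<Longrightarrow> last_A n s i = i"
  unfolding last_A_def by (auto intro: Max_eqI)

lemma last_A_cyc_pred:
  assumes "i < n" "s i = B_split"
  shows "last_A n s (cyc_pred n i) = last_A n s i"
proof (cases "i = 0")
  case True
  have "{j. j \<le> n - 1 \<and> s j = A_split} = A_crossings n s"
    using assms unfolding A_crossings_def by auto
  then show ?thesis using True assms cyc_pred_0[of n] unfolding last_A_def by auto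
next
  case False
  have "{j. j \<le> i \<and> s j = A_split} = {j. j \<le> i - 1 \<and> s j = A_split}"
    using False assms(2) by (auto simp: le_eq_less_or_eq)
  then show ?thesis using False assms cyc_pred_pos[of i n] unfolding last_A_def by auto
qed

fun curve_label :: "nat \<Rightarrow> (nat \<Rightarrow> split) \<Rightarrow> endpoint \<Rightarrow> nat" where
  "curve_label n s (i, sd, l) =
     (if A_crossings n s = {} then (case l of Inn \<Rightarrow> 0 | Outr \<Rightarrow> 1)
      else last_A n s (case sd of Rgt \<Rightarrow> i | Lft \<Rightarrow> cyc_pred n i))"

lemma curve_label_edge:
  assumes "0 < n" "(x, y) \<in> foil_segments n \<union> split_arcs n s"
  shows "x \<in> foil_ends n \<and> y \<in> foil_ends n \<and> curve_label n s x = curve_label n s y"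
  using assms(2)
proof
  assume "(x, y) \<in> foil_segments n"
  then obtain i l where "x = (i, Rgt, l)" "y = (Suc i mod n, Lft, l)" "i < n"
    unfolding foil_segments_def by blast
  then show ?thesis using assms(1) cyc_pred_Suc_mod[of i n] unfolding foil_ends_def by auto
next
  assume "(x, y) \<in> split_arcs n s"
  then consider
      (B) i l where "x = (i, Lft, l)" "y = (i, Rgt, l)" "i < n" "s i = B_split"
    | (A) i sd where "x = (i, sd, Inn)" "y = (i, sd, Outr)" "i < n" "s i = A_split"
    unfolding split_arcs_def by blast
  then show ?thesis
  proof cases
    case B
    then show ?thesis using assms(1) last_A_cyc_pred[of i n s] unfolding foil_ends_def by auto
  next
    case A
    then have "A_crossings n s \<noteq> {}" unfolding A_crossings_def by auto
    then show ?thesis using A unfolding foil_ends_def by (cases sd) auto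
  qed
qed

lemma state_rel_same_label:
  assumes "0 < n" "(x, y) \<in> state_rel n s"
  shows "x = y \<or> x \<in> foil_ends n \<and> y \<in> foil_ends n \<and> curve_label n s x = curve_label n s y"
  using assms(2) unfolding state_rel_def Let_def
proof (induction rule: rtrancl_induct)
  case (step y z)
  then show ?case using curve_label_edge[OF assms(1), of y z s] curve_label_edge[OF assms(1), of z y s]
    by auto
qed simp

lemma state_rel_refl [simp]: "(x, x) \<in> state_rel n s"
  unfolding state_rel_def Let_def by simp

lemma state_rel_sym: "(x, y) \<in> state_rel n s \<Longrightarrow> (y, x) \<in> state_rel n s"
  unfolding state_rel_def Let_def
  by (metis converse_Un converse_converse rtrancl_converseI sup_commute)

lemma state_rel_trans:
  "(x, y) \<in> state_rel n s \<Longrightarrow> (y, z) \<in> state_rel n s \<Longrightarrow> (x, z) \<in> state_rel n s"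
  unfolding state_rel_def Let_def by (rule rtrancl_trans)

lemma state_rel_segment:
  assumes "i < n"
  shows "((i, Lft, l), (cyc_pred n i, Rgt, l)) \<in> state_rel n s"
proof -
  have "((cyc_pred n i, Rgt, l), (i, Lft, l)) \<in> foil_segments n"
    using assms cyc_pred_less[of n i] Suc_cyc_pred_mod[OF assms]
    unfolding foil_segments_def by force
  then show ?thesis unfolding state_rel_def Let_def by blast
qed

lemma state_rel_B_split:
  assumes "i < n" "s i = B_split"
  shows "((i, Rgt, l), (cyc_pred n i, Rgt, l)) \<in> state_rel n s"
proof -
  have "((i, Lft, l), (i, Rgt, l)) \<in> split_arcs n s"
    using assms unfolding split_arcs_def by auto
  then have "((i, Rgt, l), (i, Lft, l)) \<in> state_rel n s"
    unfolding state_rel_def Let_def by blast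
  then show ?thesis by (rule state_rel_trans[OF _ state_rel_segment[OF assms(1)]])
qed

lemma state_rel_A_split:
  assumes "i < n" "s i = A_split"
  shows "((i, Rgt, l), (i, Rgt, Inn)) \<in> state_rel n s"
proof (cases l)
  case Outr
  have "((i, Rgt, Inn), (i, Rgt, Outr)) \<in> split_arcs n s"
    using assms unfolding split_arcs_def by auto
  then show ?thesis using Outr unfolding state_rel_def Let_def by blast
qed simp

lemma state_rel_B_run:
  assumes "k \<le> i" "i < n" "\<And>j. k < j \<Longrightarrow> j \<le> i \<Longrightarrow> s j = B_split"
  shows "((i, Rgt, l), (k, Rgt, l)) \<in> state_rel n s"
  using assms
proof (induction i)
  case (Suc i)
  show ?case
  proof (cases "k = Suc i")
    case False
    have "((Suc i, Rgt, l), (i, Rgt, l)) \<in> state_rel n s"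
      using state_rel_B_split[of "Suc i" n s l] cyc_pred_pos[of "Suc i" n] False Suc.prems by simp
    moreover have "((i, Rgt, l), (k, Rgt, l)) \<in> state_rel n s"
      using False Suc.prems by (intro Suc.IH) auto
    ultimately show ?thesis by (rule state_rel_trans)
  qed simp
qed simp

lemma state_rel_last_A_before:
  assumes "i < n" "\<exists>j\<le>i. s j = A_split"
  shows "((i, Rgt, l), (last_A n s i, Rgt, l)) \<in> state_rel n s"
proof -
  let ?J = "{j. j \<le> i \<and> s j = A_split}"
  have fin: "finite ?J" by simp
  have max: "Max ?J \<in> ?J" using assms(2) by (intro Max_in) auto
  have B: "s j = B_split" if "Max ?J < j" "j \<le> i" for j
  proof (cases "s j")
    case A_split
    then have "j \<le> Max ?J" using that(2) by (intro Max_ge[OF fin]) simp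
    with that(1) show ?thesis by linarith
  qed simp
  have "Max ?J \<le> i" using max by simp
  then have "((i, Rgt, l), (Max ?J, Rgt, l)) \<in> state_rel n s"
    using assms(1) B by (rule state_rel_B_run)
  moreover have "last_A n s i = Max ?J"
    using assms(2) unfolding last_A_def by (rule if_P)
  ultimately show ?thesis by simp
qed

lemma state_rel_last_A:
  assumes "i < n" "A_crossings n s \<noteq> {}"
  shows "((i, Rgt, l), (last_A n s i, Rgt, l)) \<in> state_rel n s"
proof (cases "\<exists>j\<le>i. s j = A_split")
  case False
  then have B: "s j = B_split" if "j \<le> i" for j
    using that by (cases "s j") auto
  obtain a where "a < n" "s a = A_split"
    using assms(2) unfolding A_crossings_def by auto
  then have last: "n - 1 < n" and ex: "\<exists>j\<le>n - 1. s j = A_split"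
    by (auto intro: exI[of _ a])
  have run: "((i, Rgt, l), (0, Rgt, l)) \<in> state_rel n s"
    by (rule state_rel_B_run) (simp_all add: assms(1) B)
  have wrap: "((0, Rgt, l), (n - 1, Rgt, l)) \<in> state_rel n s"
    using state_rel_B_split[of 0 n s l] B[of 0] cyc_pred_0[of n] last by simp
  have "{j. j \<le> n - 1 \<and> s j = A_split} = A_crossings n s"
    using assms(1) by (auto simp: A_crossings_def)
  then have "last_A n s (n - 1) = Max (A_crossings n s)"
    using ex by (simp add: last_A_def)
  moreover have "last_A n s i = Max (A_crossings n s)"
    unfolding last_A_def by (rule if_not_P[OF False])
  ultimately have "((n - 1, Rgt, l), (last_A n s i, Rgt, l)) \<in> state_rel n s"
    using state_rel_last_A_before[OF last ex] by simp
  then show ?thesis by (rule state_rel_trans[OF state_rel_trans[OF run wrap]])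
qed (use assms state_rel_last_A_before in blast)

definition curve_base :: "nat \<Rightarrow> (nat \<Rightarrow> split) \<Rightarrow> endpoint \<Rightarrow> endpoint" where
  "curve_base n s x =
     (if A_crossings n s = {} then (0, Rgt, snd (snd x)) else (curve_label n s x, Rgt, Inn))"

lemma state_rel_curve_base_Rgt:
  assumes "i < n"
  shows "((i, Rgt, l), curve_base n s (i, Rgt, l)) \<in> state_rel n s"
proof (cases "A_crossings n s = {}")
  case True
  then have "s j = B_split" if "j < n" for j
    using that by (cases "s j") (auto simp: A_crossings_def)
  then have "((i, Rgt, l), (0, Rgt, l)) \<in> state_rel n s"
    using assms by (intro state_rel_B_run) auto
  then show ?thesis using True by (simp add: curve_base_def)
next
  case False
  have "last_A n s i \<in> A_crossings n s" using last_A_mem[OF assms False] .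
  then have "((last_A n s i, Rgt, l), (last_A n s i, Rgt, Inn)) \<in> state_rel n s"
    unfolding A_crossings_def by (auto intro: state_rel_A_split)
  with state_rel_last_A[OF assms False] False show ?thesis
    unfolding curve_base_def by (simp add: state_rel_trans[of _ "(last_A n s i, Rgt, l)"])
qed

lemma state_rel_curve_base:
  assumes "0 < n" "x \<in> foil_ends n"
  shows "(x, curve_base n s x) \<in> state_rel n s"
proof -
  obtain i sd l where x: "x = (i, sd, l)" "i < n" using assms(2) unfolding foil_ends_def by auto
  show ?thesis
  proof (cases sd)
    case Lft
    have "(x, curve_base n s (cyc_pred n i, Rgt, l)) \<in> state_rel n s"
      using x Lft state_rel_trans[OF state_rel_segment[OF x(2)]
        state_rel_curve_base_Rgt[OF cyc_pred_less[OF assms(1)]]] by simp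
    moreover have "curve_base n s (cyc_pred n i, Rgt, l) = curve_base n s x"
      unfolding curve_base_def using x Lft by simp
    ultimately show ?thesis by simp
  qed (use x state_rel_curve_base_Rgt in simp)
qed

lemma curve_base_eq:
  "curve_label n s x = curve_label n s y \<Longrightarrow> curve_base n s x = curve_base n s y"
  by (cases x; cases y) (auto simp: curve_base_def split: level.splits if_splits)

lemma state_rel_class:
  assumes "0 < n" "x \<in> foil_ends n"
  shows "state_rel n s `` {x} = {y \<in> foil_ends n. curve_label n s y = curve_label n s x}"
proof (intro equalityI subsetI)
  fix y assume "y \<in> state_rel n s `` {x}"
  then show "y \<in> {y \<in> foil_ends n. curve_label n s y = curve_label n s x}"
    using state_rel_same_label[OF assms(1), of x y s] assms(2) by auto
next
  fix y assume y: "y \<in> {y \<in> foil_ends n. curve_label n s y = curve_label n s x}"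
  then have "curve_base n s y = curve_base n s x" by (intro curve_base_eq) simp
  moreover have "(y, curve_base n s y) \<in> state_rel n s"
    using y by (intro state_rel_curve_base[OF assms(1)]) simp
  ultimately have "(x, y) \<in> state_rel n s"
    using state_rel_trans[OF state_rel_curve_base[OF assms] state_rel_sym] by simp
  then show "y \<in> state_rel n s `` {x}" by simp
qed

lemma card_quotient_eq_card_image:
  assumes "\<And>x. x \<in> A \<Longrightarrow> R `` {x} = {y \<in> A. f y = f x}"
  shows "card (A // R) = card (f ` A)"
proof -
  have "A // R = (\<lambda>v. {y \<in> A. f y = v}) ` (f ` A)"
    unfolding quotient_def image_image using assms by auto
  moreover have "inj_on (\<lambda>v. {y \<in> A. f y = v}) (f ` A)"
    by (rule inj_onI) blast
  ultimately show ?thesis by (simp add: card_image)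
qed

lemma curve_label_image:
  assumes "0 < n"
  shows "curve_label n s ` foil_ends n = (if A_crossings n s = {} then {0, 1} else A_crossings n s)"
proof (cases "A_crossings n s = {}")
  case True
  have "(0, Rgt, Inn) \<in> foil_ends n" "(0, Rgt, Outr) \<in> foil_ends n"
    using assms unfolding foil_ends_def by auto
  moreover have "curve_label n s (0, Rgt, Inn) = 0" "curve_label n s (0, Rgt, Outr) = 1"
    using True by simp_all
  ultimately have "{0, 1} \<subseteq> curve_label n s ` foil_ends n"
    by (metis image_eqI insert_subset empty_subsetI)
  moreover have "curve_label n s ` foil_ends n \<subseteq> {0, 1}"
    using True by (auto split: level.splits)
  ultimately show ?thesis using True by auto
next
  case False
  have "curve_label n s x \<in> A_crossings n s" if x: "x \<in> foil_ends n" for x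
  proof -
    obtain i sd l where "x = (i, sd, l)" "i < n" using x unfolding foil_ends_def by auto
    then show ?thesis
      using False last_A_mem[OF _ False] cyc_pred_less[OF assms] by (cases sd) auto
  qed
  then have "curve_label n s ` foil_ends n \<subseteq> A_crossings n s" by blast
  moreover have "A_crossings n s \<subseteq> curve_label n s ` foil_ends n"
  proof
    fix a assume a: "a \<in> A_crossings n s"
    then have "s a = A_split" by (simp add: A_crossings_def)
    then have "curve_label n s (a, Rgt, Inn) = a"
      using False by (simp add: last_A_self)
    moreover have "(a, Rgt, Inn) \<in> foil_ends n" using a unfolding foil_ends_def A_crossings_def by auto
    ultimately show "a \<in> curve_label n s ` foil_ends n" by force
  qed
  ultimately show ?thesis using False by auto
qed

theorem num_curves_eq:
  assumes "0 < n"
  shows "num_curves n s = (if A_crossings n s = {} then 2 else card (A_crossings n s))"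
proof -
  have "num_curves n s = card (curve_label n s ` foil_ends n)"
    unfolding num_curves_def by (rule card_quotient_eq_card_image) (rule state_rel_class[OF assms])
  then show ?thesis using curve_label_image[OF assms] by simp
qed

lemma state_of_word_eq_A_iff: "state_of_word \<pi> w c = A_split \<longleftrightarrow> w ! \<pi> c = 0"
  by (simp add: state_of_word_def)

lemma card_A_crossings_state_of_word:
  assumes "bij_betw \<pi> {0..<n} {0..<n}" "length w = n"
  shows "card (A_crossings n (state_of_word \<pi> w)) = count_list w 0"
proof -
  let ?C = "{c. c < n \<and> w ! \<pi> c = 0}"
  have A: "A_crossings n (state_of_word \<pi> w) = ?C"
    unfolding A_crossings_def state_of_word_eq_A_iff ..
  have inj: "inj_on \<pi> ?C"
    by (rule inj_on_subset[OF bij_betw_imp_inj_on[OF assms(1)]]) auto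
  have "\<pi> ` ?C = {i. i < n \<and> w ! i = 0}"
  proof (intro equalityI subsetI)
    fix i assume "i \<in> \<pi> ` ?C"
    then obtain c where "c \<in> ?C" "i = \<pi> c" by blast
    then show "i \<in> {i. i < n \<and> w ! i = 0}"
      using bij_betw_apply[OF assms(1), of c] by simp
  next
    fix i assume i: "i \<in> {i. i < n \<and> w ! i = 0}"
    then have "i \<in> \<pi> ` {0..<n}" using bij_betw_imp_surj_on[OF assms(1)] by simp
    then obtain c where "c < n" "i = \<pi> c" by auto
    then show "i \<in> \<pi> ` ?C" using i by blast
  qed
  then have img: "\<pi> ` ?C = {i. i < length w \<and> w ! i = 0}"
    by (simp only: assms(2))
  have "card (A_crossings n (state_of_word \<pi> w)) = card (\<pi> ` ?C)"
    unfolding A by (rule card_image[OF inj, symmetric])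
  also have "\<dots> = length (filter (\<lambda>x. x = 0) w)"
    unfolding img by (rule length_filter_conv_card[symmetric])
  also have "\<dots> = count_list w 0"
    by (induction w) auto
  finally show ?thesis .
qed

lemma count_list_0_binary_iff:
  assumes "set w \<subseteq> {0 :: nat, 1}"
  shows "count_list w 0 = 0 \<longleftrightarrow> w = replicate (length w) 1"
proof -
  have "count_list w 0 = 0 \<longleftrightarrow> (\<forall>x\<in>set w. x = 1)"
    using assms by (auto simp: count_list_0_iff)
  also have "\<dots> \<longleftrightarrow> w = replicate (length w) 1"
    by (metis in_set_replicate replicate_length_same)
  finally show ?thesis .
qed

lemma count_list_2_binary_iff:
  assumes "2 \<le> n"
  shows "w \<in> {replicate p 1 @ [0] @ replicate k 1 @ [0] @ replicate (n - p - k - 2) 1 | p k.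
                p \<le> n - 2 \<and> k \<le> n - p - 2}
     \<longleftrightarrow> length w = n \<and> set w \<subseteq> {0 :: nat, 1} \<and> count_list w 0 = 2"
proof
  assume "w \<in> {replicate p 1 @ [0] @ replicate k 1 @ [0] @ replicate (n - p - k - 2) 1 | p k.
                p \<le> n - 2 \<and> k \<le> n - p - 2}"
  then show "length w = n \<and> set w \<subseteq> {0, 1} \<and> count_list w 0 = 2"
    using assms by auto
next
  assume "length w = n \<and> set w \<subseteq> {0, 1} \<and> count_list w 0 = 2"
  then have len: "length w = n" and bin: "set w \<subseteq> {0, 1}" and "count_list w 0 = 2"
    by auto
  then obtain ys zs where w_eq: "w = ys @ 0 # zs" and ys: "0 \<notin> set ys"
    and zs: "count_list zs 0 = 1"
    using count_list_Suc_split_first[of w 0 1] by auto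
  then obtain us vs where zs_eq: "zs = us @ 0 # vs" and us: "0 \<notin> set us"
    and vs: "count_list vs 0 = 0"
    using count_list_Suc_split_first[of zs 0 0] by auto
  have "ys = replicate (length ys) 1"
    using count_list_0_binary_iff[of ys] ys bin w_eq by (simp add: count_list_0_iff)
  moreover have "us = replicate (length us) 1"
    using count_list_0_binary_iff[of us] us bin w_eq zs_eq by (simp add: count_list_0_iff)
  moreover have "vs = replicate (length vs) 1"
    using count_list_0_binary_iff[of vs] vs bin w_eq zs_eq by simp
  moreover have "length vs = n - length ys - length us - 2"
    using len w_eq zs_eq by simp
  ultimately show "w \<in> {replicate p 1 @ [0] @ replicate k 1 @ [0] @ replicate (n - p - k - 2) 1 | p k.
                p \<le> n - 2 \<and> k \<le> n - p - 2}"
    using len w_eq zs_eq by (intro CollectI exI[of _ "length ys"] exI[of _ "length us"]) auto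
qed

theorem corollary23:
  fixes n :: nat and \<pi> :: "nat \<Rightarrow> nat"
  assumes "n \<ge> 2" and "bij_betw \<pi> {0..<n} {0..<n}"
  shows "{w :: nat list. length w = n \<and> set w \<subseteq> {0, 1} \<and>
            num_curves n (state_of_word \<pi> w) = 2}
       = {replicate p 1 @ [0] @ replicate k 1 @ [0] @ replicate (n - p - k - 2) 1 | p k.
            p \<le> n - 2 \<and> k \<le> n - p - 2} \<union> {replicate n 1}"
proof -
  have curves: "num_curves n (state_of_word \<pi> w) = 2 \<longleftrightarrow> count_list w 0 \<in> {0, 2}"
    if "length w = n" for w
    using num_curves_eq[of n "state_of_word \<pi> w"] assms
      card_A_crossings_state_of_word[OF assms(2) that]
      card_0_eq[of "A_crossings n (state_of_word \<pi> w)"]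
    by (auto simp: A_crossings_def)
  let ?binary = "\<lambda>w :: nat list. length w = n \<and> set w \<subseteq> {0, 1}"
  have "{w. ?binary w \<and> num_curves n (state_of_word \<pi> w) = 2}
      = {w. ?binary w \<and> count_list w 0 = 2} \<union> {w. ?binary w \<and> count_list w 0 = 0}"
    using curves by auto
  also have "{w. ?binary w \<and> count_list w 0 = 2}
      = {replicate p 1 @ [0] @ replicate k 1 @ [0] @ replicate (n - p - k - 2) 1 | p k.
          p \<le> n - 2 \<and> k \<le> n - p - 2}"
    using count_list_2_binary_iff[OF assms(1)] by blast
  also have "{w. ?binary w \<and> count_list w 0 = 0} = {replicate n 1}"
    using count_list_0_binary_iff by force
  finally show ?thesis by (simp only: conj_assoc)
qed

end
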